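(* Let $K$ be a field, $S=K[x_1,\ldots,x_n]$, and $\alpha=(k_1,\ldots,k_n)\in\mathbb N^n$. A monomial ideal $I\subset S$ is polymatroidal if and only if its expansion $I^\alpha\subset S^\alpha$ is polymatroidal.
   Context: $\mathbb N$ denotes the positive integers. For $\alpha=(k_1,\ldots,k_n)\in\mathbb N^n$ let $S^\alpha=K[x_{ij}:1\le i\le n,\ 1\le j\le k_i]$ and $P_i=(x_{i1},\ldots,x_{ik_i})\subset S^\alpha$. If $I$ is a monomial ideal with minimal monomial generating set $G(I)=\{\mathbf x^{\mathbf a_1},\ldots,\mathbf x^{\mathbf a_r}\}$, $\mathbf x^{\mathbf a}=x_1^{\mathbf a(1)}\cdots x_n^{\mathbf a(n)}$, its expansion is $I^\alpha=\sum_{l=1}^r P_1^{\mathbf a_l(1)}\cdots P_n^{\mathbf a_l(n)}\subset S^\alpha$. A monomial ideal $I$ is polymatroidal if (i) all elements of $G(I)$ have the same degree, and (ii) whenever $u=x_1^{a_1}\cdots x_n^{a_n}$ and $v=x_1^{b_1}\cdots x_n^{b_n}$ belong to $G(I)$ with $a_i>b_i$, there exists $j$ with $a_j<b_j$ such that $x_j(u/x_i)\in G(I)$. (For $I^\alpha$ the same definition is used in the polynomial ring $S^\alpha$.) *)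

theory Defs
  imports Main
begin

text \<open>Over a field K, a monomial ideal is
  determined by the set of monomials it contains, so a monomial ideal of
  K[x_v : v in V] is represented by that set of monomials: a set of monomials
  closed under multiplication by arbitrary monomials.\<close>

definition monomials :: "'v set \<Rightarrow> ('v \<Rightarrow> nat) set" where
  "monomials V = {u. \<forall>x. x \<notin> V \<longrightarrow> u x = 0}"

definition mon_divides :: "('v \<Rightarrow> nat) \<Rightarrow> ('v \<Rightarrow> nat) \<Rightarrow> bool" where
  "mon_divides u w \<longleftrightarrow> (\<forall>x. u x \<le> w x)"

definition monomial_ideal :: "'v set \<Rightarrow> ('v \<Rightarrow> nat) set \<Rightarrow> bool" where
  "monomial_ideal V I \<longleftrightarrow> I \<subseteq> monomials V \<and>
     (\<forall>u\<in>I. \<forall>w\<in>monomials V. (\<lambda>x. u x + w x) \<in> I)"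

definition gen_ideal :: "'v set \<Rightarrow> ('v \<Rightarrow> nat) set \<Rightarrow> ('v \<Rightarrow> nat) set" where
  "gen_ideal V A = {w \<in> monomials V. \<exists>a\<in>A. mon_divides a w}"

definition mingens :: "('v \<Rightarrow> nat) set \<Rightarrow> ('v \<Rightarrow> nat) set" where
  "mingens I = {u \<in> I. \<forall>w\<in>I. mon_divides w u \<longrightarrow> w = u}"

definition mdeg :: "'v set \<Rightarrow> ('v \<Rightarrow> nat) \<Rightarrow> nat" where
  "mdeg V u = (\<Sum>x\<in>V. u x)"

definition polymatroidal :: "'v set \<Rightarrow> ('v \<Rightarrow> nat) set \<Rightarrow> bool" where
  "polymatroidal V I \<longleftrightarrow>
     (\<forall>u\<in>mingens I. \<forall>w\<in>mingens I. mdeg V u = mdeg V w) \<and>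
     (\<forall>u\<in>mingens I. \<forall>w\<in>mingens I. \<forall>i\<in>V. u i > w i \<longrightarrow>
        (\<exists>j\<in>V. u j < w j \<and> (u(i := u i - 1))(j := u j + 1) \<in> mingens I))"

text \<open>Variables of S = K[x_1..x_n] and of S^alpha = K[x_ij : 1<=i<=n, 1<=j<=k_i].\<close>
definition vars :: "nat \<Rightarrow> nat set" where
  "vars n = {1..n}"

definition exp_vars :: "nat \<Rightarrow> (nat \<Rightarrow> nat) \<Rightarrow> (nat \<times> nat) set" where
  "exp_vars n k = {(i, j). 1 \<le> i \<and> i \<le> n \<and> 1 \<le> j \<and> j \<le> k i}"

text \<open>Monomial generators of P_1^(a 1) ... P_n^(a n), with P_i = (x_i1,...,x_ik_i):
  the monomials of S^alpha having degree exactly a i in the block of variables x_i*.\<close>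
definition prodP_gens :: "nat \<Rightarrow> (nat \<Rightarrow> nat) \<Rightarrow> (nat \<Rightarrow> nat) \<Rightarrow> (nat \<times> nat \<Rightarrow> nat) set" where
  "prodP_gens n k a = {m \<in> monomials (exp_vars n k).
      \<forall>i\<in>{1..n}. (\<Sum>j\<in>{1..k i}. m (i, j)) = a i}"

definition expansion :: "nat \<Rightarrow> (nat \<Rightarrow> nat) \<Rightarrow> (nat \<Rightarrow> nat) set \<Rightarrow> (nat \<times> nat \<Rightarrow> nat) set" where
  "expansion n k I = gen_ideal (exp_vars n k) (\<Union>a\<in>mingens I. prodP_gens n k a)"

end

theory Submission
  imports Defs
begin

text \<open>Read a monomial of S^alpha through its block degrees: it lies in
  P_1^(a 1) ... P_n^(a n) exactly when its degree in the block x_i1, ..., x_ik_i is a i.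
  Hence G(I^alpha) is the union of these sets over a in G(I), and every minimal
  generator determines its a. Moving one unit of exponent from x_ij to x_lj' moves
  one unit from x_i to x_l in a, and changes nothing when i = l; so exchanges inside
  a block are always possible, and exchanges between blocks are exchanges of I.
  Conversely, the exchanges of I are read off from those of I^alpha between the
  monomials concentrated on the variables x_i1.\<close>

lemma mon_divides_trans: "mon_divides u v \<Longrightarrow> mon_divides v w \<Longrightarrow> mon_divides u w"
  unfolding mon_divides_def using le_trans by blast

lemma mon_divides_antisym: "mon_divides u w \<Longrightarrow> mon_divides w u \<Longrightarrow> u = w"
  unfolding mon_divides_def by (simp add: antisym fun_eq_iff)

lemma mingens_subset_monomials:
  assumes "monomial_ideal V I"
  shows "mingens I \<subseteq> monomials V"
  using assms by (auto simp: mingens_def monomial_ideal_def)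

definition block_deg :: "(nat \<Rightarrow> nat) \<Rightarrow> (nat \<times> nat \<Rightarrow> nat) \<Rightarrow> nat \<Rightarrow> nat" where
  "block_deg k m i = (\<Sum>j\<in>{1..k i}. m (i, j))"

lemma prodP_gens_iff:
  "m \<in> prodP_gens n k a \<longleftrightarrow>
     m \<in> monomials (exp_vars n k) \<and> (\<forall>i\<in>{1..n}. block_deg k m i = a i)"
  by (simp add: prodP_gens_def block_deg_def)

lemma exp_vars_Sigma: "exp_vars n k = Sigma {1..n} (\<lambda>i. {1..k i})"
  by (auto simp: exp_vars_def)

lemma mdeg_exp_vars: "mdeg (exp_vars n k) m = (\<Sum>i\<in>{1..n}. block_deg k m i)"
  by (simp add: mdeg_def exp_vars_Sigma sum.Sigma block_deg_def)

lemma mdeg_prodP_gens: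
  assumes "m \<in> prodP_gens n k a"
  shows "mdeg (exp_vars n k) m = mdeg (vars n) a"
  using assms unfolding mdeg_exp_vars by (simp add: prodP_gens_iff mdeg_def vars_def)

lemma block_deg_mono:
  assumes "\<forall>j\<in>{1..k i}. m (i, j) \<le> m' (i, j)"
  shows "block_deg k m i \<le> block_deg k m' i"
  using assms unfolding block_deg_def by (intro sum_mono) auto

lemma block_deg_less_imp_less:
  assumes "block_deg k m i < block_deg k m' i"
  shows "\<exists>j\<in>{1..k i}. m (i, j) < m' (i, j)"
  using assms block_deg_mono[of k i m' m] by (meson not_le)

lemma prodP_gens_index_unique:
  assumes "m \<in> prodP_gens n k a" "m \<in> prodP_gens n k b"
    and "a \<in> monomials (vars n)" "b \<in> monomials (vars n)"
  shows "a = b"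
proof
  fix x
  show "a x = b x"
    using assms by (cases "x \<in> {1..n}") (auto simp: prodP_gens_iff monomials_def vars_def)
qed

lemma prodP_gens_divides_index:
  assumes "m' \<in> prodP_gens n k a'" "m \<in> prodP_gens n k a" "mon_divides m' m"
    and "a' \<in> monomials (vars n)" "a \<in> monomials (vars n)"
  shows "mon_divides a' a"
  unfolding mon_divides_def
proof
  fix x
  show "a' x \<le> a x"
  proof (cases "x \<in> {1..n}")
    case True
    then show ?thesis
      using assms(1-3) block_deg_mono[of k x m' m] by (auto simp: prodP_gens_iff mon_divides_def)
  next
    case False
    then show ?thesis using assms(4,5) by (auto simp: monomials_def vars_def)
  qed
qed

lemma prodP_gens_divides_eq:
  assumes m': "m' \<in> prodP_gens n k a" and m: "m \<in> prodP_gens n k a" and d: "mon_divides m' m"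
  shows "m' = m"
proof
  fix x
  show "m' x = m x"
  proof (cases "x \<in> exp_vars n k")
    case True
    then obtain i j where x: "x = (i, j)" "i \<in> {1..n}" "j \<in> {1..k i}"
      by (auto simp: exp_vars_def)
    have "block_deg k m' i = block_deg k m i"
      using m' m x by (simp add: prodP_gens_iff)
    then show ?thesis
      using x d by (auto simp: block_deg_def mon_divides_def intro: sum_mono_inv)
  next
    case False
    then show ?thesis using m' m by (cases x) (simp add: prodP_gens_iff monomials_def)
  qed
qed

lemma prodP_gens_subset_expansion:
  assumes "a \<in> mingens I"
  shows "prodP_gens n k a \<subseteq> expansion n k I"
  using assms by (auto simp: expansion_def gen_ideal_def prodP_gens_def mon_divides_def)

lemma mingens_expansion:
  assumes I: "monomial_ideal (vars n) I"
  shows "mingens (expansion n k I) = (\<Union>a\<in>mingens I. prodP_gens n k a)"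
proof
  show "mingens (expansion n k I) \<subseteq> (\<Union>a\<in>mingens I. prodP_gens n k a)"
  proof
    fix m assume m: "m \<in> mingens (expansion n k I)"
    then obtain a m' where a: "a \<in> mingens I" and m': "m' \<in> prodP_gens n k a"
      and "mon_divides m' m"
      by (auto simp: mingens_def expansion_def gen_ideal_def)
    moreover have "m' \<in> expansion n k I"
      using prodP_gens_subset_expansion[OF a] m' by blast
    ultimately have "m' = m"
      using m by (simp add: mingens_def)
    with a m' show "m \<in> (\<Union>a\<in>mingens I. prodP_gens n k a)" by blast
  qed
  show "(\<Union>a\<in>mingens I. prodP_gens n k a) \<subseteq> mingens (expansion n k I)"
  proof
    fix m assume "m \<in> (\<Union>a\<in>mingens I. prodP_gens n k a)"
    then obtain a where a: "a \<in> mingens I" and m: "m \<in> prodP_gens n k a" by blast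
    have "w = m" if w: "w \<in> expansion n k I" "mon_divides w m" for w
    proof -
      obtain a' m' where a': "a' \<in> mingens I" and m': "m' \<in> prodP_gens n k a'"
        and m'w: "mon_divides m' w"
        using w(1) by (auto simp: expansion_def gen_ideal_def)
      have m'm: "mon_divides m' m"
        using m'w w(2) by (rule mon_divides_trans)
      have "mon_divides a' a"
        using prodP_gens_divides_index[OF m' m m'm] a a' mingens_subset_monomials[OF I] by blast
      with a a' have "a' = a" by (simp add: mingens_def)
      with m' m m'm have "m' = m" by (simp add: prodP_gens_divides_eq)
      with m'w w(2) show "w = m" by (simp add: mon_divides_antisym)
    qed
    moreover have "m \<in> expansion n k I"
      using prodP_gens_subset_expansion[OF a] m by blast
    ultimately show "m \<in> mingens (expansion n k I)"
      by (simp add: mingens_def)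
  qed
qed

lemma block_deg_indicator:
  assumes "(i, j) \<in> exp_vars n k"
  shows "block_deg k (\<lambda>x. if x = (i, j) then 1 else 0) r = (if r = i then 1 else 0)"
proof (cases "r = i")
  case True
  with assms have "block_deg k (\<lambda>x. if x = (i, j) then 1 else 0) r
      = (\<Sum>jj\<in>{1..k i}. if jj = j then 1 else 0)"
    by (simp add: block_deg_def)
  also have "\<dots> = 1" using assms by (simp add: exp_vars_def)
  finally show ?thesis using True by simp
qed (simp add: block_deg_def)

lemma block_deg_add: "block_deg k (\<lambda>x. f x + g x) r = block_deg k f r + block_deg k g r"
  by (simp add: block_deg_def sum.distrib)

lemma block_deg_exchange:
  assumes p: "(i, j) \<in> exp_vars n k" and q: "(l, j') \<in> exp_vars n k"
    and pos: "0 < m (i, j)" and ne: "(i, j) \<noteq> (l, j')"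
  shows "block_deg k ((m((i, j) := m (i, j) - 1))((l, j') := m (l, j') + 1)) r + (if r = i then 1 else 0)
       = block_deg k m r + (if r = l then 1 else 0)"
proof -
  let ?m' = "(m((i, j) := m (i, j) - 1))((l, j') := m (l, j') + 1)"
  have "\<And>x. ?m' x + (if x = (i, j) then 1 else 0) = m x + (if x = (l, j') then 1 else 0)"
    using pos ne by auto
  then have "block_deg k (\<lambda>x. ?m' x + (if x = (i, j) then 1 else 0)) r
      = block_deg k (\<lambda>x. m x + (if x = (l, j') then 1 else 0)) r"
    by presburger
  then show ?thesis
    unfolding block_deg_add block_deg_indicator[OF p] block_deg_indicator[OF q] .
qed

text \<open>The hypothesis on c says c = a - e_i + e_l without truncated subtraction.\<close>
lemma prodP_gens_exchange:
  assumes m: "m \<in> prodP_gens n k a"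
    and p: "(i, j) \<in> exp_vars n k" and q: "(l, j') \<in> exp_vars n k"
    and pos: "0 < m (i, j)" and ne: "(i, j) \<noteq> (l, j')"
    and c: "\<forall>x. c x + (if x = i then 1 else 0) = a x + (if x = l then 1 else 0)"
  shows "(m((i, j) := m (i, j) - 1))((l, j') := m (l, j') + 1) \<in> prodP_gens n k c"
  unfolding prodP_gens_iff
proof
  show "(m((i, j) := m (i, j) - 1))((l, j') := m (l, j') + 1) \<in> monomials (exp_vars n k)"
    using m p q by (simp add: prodP_gens_iff monomials_def)
  show "\<forall>r\<in>{1..n}. block_deg k ((m((i, j) := m (i, j) - 1))((l, j') := m (l, j') + 1)) r = c r"
    using block_deg_exchange[where m = m, OF p q pos ne] m c
    by (simp add: prodP_gens_iff) (metis add_right_cancel)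
qed

lemma expansion_exchange:
  assumes PI: "polymatroidal (vars n) I"
    and a: "a \<in> mingens I" and u: "u \<in> prodP_gens n k a"
    and b: "b \<in> mingens I" and w: "w \<in> prodP_gens n k b"
    and p: "(i, j) \<in> exp_vars n k" and gt: "w (i, j) < u (i, j)"
  shows "\<exists>q\<in>exp_vars n k. u q < w q \<and>
           (u((i, j) := u (i, j) - 1))(q := u q + 1) \<in> (\<Union>a\<in>mingens I. prodP_gens n k a)"
proof -
  have i: "i \<in> {1..n}" and j: "j \<in> {1..k i}" using p by (auto simp: exp_vars_def)
  show ?thesis
  proof (cases "\<exists>j'\<in>{1..k i}. u (i, j') < w (i, j')")
    case True
    then obtain j' where j': "j' \<in> {1..k i}" "u (i, j') < w (i, j')" by blast
    have q: "(i, j') \<in> exp_vars n k" using i j' by (simp add: exp_vars_def)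
    have "(i, j) \<noteq> (i, j')" using gt j' by auto
    then have "(u((i, j) := u (i, j) - 1))((i, j') := u (i, j') + 1) \<in> prodP_gens n k a"
      using prodP_gens_exchange[OF u p q] gt by simp
    with a q j' show ?thesis by blast
  next
    case False
    then have "block_deg k w i < block_deg k u i"
      unfolding block_deg_def using j gt by (intro sum_strict_mono_ex1) auto
    then have abi: "b i < a i" using u w i by (simp add: prodP_gens_iff)
    with PI a b i obtain l where l: "l \<in> {1..n}" "a l < b l"
      and c: "(a(i := a i - 1))(l := a l + 1) \<in> mingens I"
      unfolding polymatroidal_def vars_def by blast
    then have "block_deg k u l < block_deg k w l"
      using u w by (simp add: prodP_gens_iff)
    then obtain j' where j': "j' \<in> {1..k l}" "u (l, j') < w (l, j')"
      using block_deg_less_imp_less by blast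
    have q: "(l, j') \<in> exp_vars n k" using l j' by (simp add: exp_vars_def)
    have "l \<noteq> i" using l abi by auto
    then have "(u((i, j) := u (i, j) - 1))((l, j') := u (l, j') + 1)
        \<in> prodP_gens n k ((a(i := a i - 1))(l := a l + 1))"
      using prodP_gens_exchange[OF u p q] gt abi by auto
    with c q j' show ?thesis by blast
  qed
qed

lemma polymatroidal_expansion:
  assumes I: "monomial_ideal (vars n) I" and PI: "polymatroidal (vars n) I"
  shows "polymatroidal (exp_vars n k) (expansion n k I)"
  unfolding polymatroidal_def mingens_expansion[OF I]
proof (intro conjI ballI impI)
  fix u w assume "u \<in> (\<Union>a\<in>mingens I. prodP_gens n k a)" "w \<in> (\<Union>a\<in>mingens I. prodP_gens n k a)"
  then obtain a b where "a \<in> mingens I" "u \<in> prodP_gens n k a" "b \<in> mingens I" "w \<in> prodP_gens n k b"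
    by blast
  with PI show "mdeg (exp_vars n k) u = mdeg (exp_vars n k) w"
    unfolding polymatroidal_def by (metis mdeg_prodP_gens)
next
  fix u w p
  assume "u \<in> (\<Union>a\<in>mingens I. prodP_gens n k a)" "w \<in> (\<Union>a\<in>mingens I. prodP_gens n k a)"
    and p: "p \<in> exp_vars n k" and gt: "w p < u p"
  then obtain a b where "a \<in> mingens I" "u \<in> prodP_gens n k a" "b \<in> mingens I" "w \<in> prodP_gens n k b"
    by blast
  moreover obtain i j where "p = (i, j)" by fastforce
  ultimately show "\<exists>q\<in>exp_vars n k. u q < w q \<and>
          (u(p := u p - 1))(q := u q + 1) \<in> (\<Union>a\<in>mingens I. prodP_gens n k a)"
    using expansion_exchange[OF PI] p gt by simp
qed

definition lift_first :: "nat \<Rightarrow> (nat \<Rightarrow> nat) \<Rightarrow> nat \<times> nat \<Rightarrow> nat" where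
  "lift_first n a = (\<lambda>(i, j). if j = 1 \<and> i \<in> {1..n} then a i else 0)"

lemma lift_first_in_prodP_gens:
  assumes k: "\<forall>i\<in>{1..n}. 1 \<le> k i"
  shows "lift_first n a \<in> prodP_gens n k a"
  unfolding prodP_gens_iff
proof
  show "lift_first n a \<in> monomials (exp_vars n k)"
    using k by (auto simp: monomials_def lift_first_def exp_vars_def)
  show "\<forall>i\<in>{1..n}. block_deg k (lift_first n a) i = a i"
  proof
    fix i assume i: "i \<in> {1..n}"
    then have "block_deg k (lift_first n a) i = (\<Sum>j\<in>{1..k i}. if j = 1 then a i else 0)"
      by (simp add: block_deg_def lift_first_def)
    also have "\<dots> = a i" using k i by simp
    finally show "block_deg k (lift_first n a) i = a i" .
  qed
qed

lemma lift_first_in_mingens_expansion: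
  assumes "\<forall>i\<in>{1..n}. 1 \<le> k i" "monomial_ideal (vars n) I" "a \<in> mingens I"
  shows "lift_first n a \<in> mingens (expansion n k I)"
  using assms mingens_expansion lift_first_in_prodP_gens by blast

lemma polymatroidal_of_expansion:
  assumes k: "\<forall>i\<in>{1..n}. 1 \<le> k i" and I: "monomial_ideal (vars n) I"
    and PE: "polymatroidal (exp_vars n k) (expansion n k I)"
  shows "polymatroidal (vars n) I"
  unfolding polymatroidal_def
proof (intro conjI ballI impI)
  fix a b assume "a \<in> mingens I" "b \<in> mingens I"
  with PE show "mdeg (vars n) a = mdeg (vars n) b"
    unfolding polymatroidal_def
    by (metis mdeg_prodP_gens lift_first_in_prodP_gens[OF k] lift_first_in_mingens_expansion[OF k I])
next
  fix a b i assume a: "a \<in> mingens I" and b: "b \<in> mingens I" and i: "i \<in> vars n" and gt: "b i < a i"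
  let ?A = "lift_first n a"
  have i1: "i \<in> {1..n}" using i by (simp add: vars_def)
  have p: "(i, 1) \<in> exp_vars n k" using i1 k by (simp add: exp_vars_def)
  have "lift_first n b (i, 1) < ?A (i, 1)" using gt i1 by (simp add: lift_first_def)
  with PE lift_first_in_mingens_expansion[OF k I a] lift_first_in_mingens_expansion[OF k I b] p
  obtain q where q: "q \<in> exp_vars n k" "?A q < lift_first n b q"
    and upd: "(?A((i, 1) := ?A (i, 1) - 1))(q := ?A q + 1) \<in> mingens (expansion n k I)"
    unfolding polymatroidal_def by blast
  obtain l j' where qlj: "q = (l, j')" by fastforce
  have q_first: "q = (l, 1)" and l: "l \<in> {1..n}" and alb: "a l < b l"
    using q(2) qlj by (auto simp: lift_first_def split: if_splits)
  have li: "l \<noteq> i" using alb gt by auto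
  from upd obtain c where c: "c \<in> mingens I"
    and upd_c: "(?A((i, 1) := ?A (i, 1) - 1))(q := ?A q + 1) \<in> prodP_gens n k c"
    using mingens_expansion[OF I] by blast
  let ?a' = "(a(i := a i - 1))(l := a l + 1)"
  have "(?A((i, 1) := ?A (i, 1) - 1))(q := ?A q + 1) \<in> prodP_gens n k ?a'"
    unfolding q_first
  proof (rule prodP_gens_exchange[OF lift_first_in_prodP_gens[OF k] p])
    show "(l, 1) \<in> exp_vars n k" using q q_first by simp
    show "0 < ?A (i, 1)" using gt i1 by (simp add: lift_first_def)
    show "(i, 1) \<noteq> (l, 1)" using li by simp
    show "\<forall>x. ?a' x + (if x = i then 1 else 0) = a x + (if x = l then 1 else 0)"
      using li gt by auto
  qed
  moreover have "?a' \<in> monomials (vars n)"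
    using mingens_subset_monomials[OF I] a i1 l by (auto simp: monomials_def vars_def)
  ultimately have "c = ?a'"
    using prodP_gens_index_unique[OF upd_c] c mingens_subset_monomials[OF I] by blast
  with c l alb show "\<exists>j\<in>vars n. a j < b j \<and> (a(i := a i - 1))(j := a j + 1) \<in> mingens I"
    by (auto simp: vars_def)
qed

theorem theorem1p2:
  fixes n :: nat and k :: "nat \<Rightarrow> nat" and I :: "(nat \<Rightarrow> nat) set"
  assumes "\<forall>i\<in>{1..n}. 1 \<le> k i"
    and "monomial_ideal (vars n) I"
  shows "polymatroidal (vars n) I \<longleftrightarrow> polymatroidal (exp_vars n k) (expansion n k I)"
  using polymatroidal_expansion[OF assms(2)] polymatroidal_of_expansion[OF assms] by blast

end
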